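(* Let $\mathcal F_2$ be the set of the following five graphs: the path $P_4$; $K_5\setminus S_2$ (the complete graph on 5 vertices with the two edges of a path $uvw$ removed); $K_6\setminus M_2$ (the complete graph on 6 vertices with two disjoint edges removed); the graph on vertices $1,\dots,5$ with edges $23,24,34,14,45$ (a triangle with two pendant vertices attached to the same triangle vertex); and the graph on vertices $1,\dots,5$ with edges $12,14,23,24,34,45$ (the diamond $K_4$ minus edge $13$ with a pendant vertex attached to the degree-3 vertex $4$). A simple connected graph $G$ is $\mathcal F_2$-free (no induced subgraph of $G$ is isomorphic to a member of $\mathcal F_2$) if and only if $G$ is an induced subgraph of $K_{m,n,o}$ or of $T_n\vee(K_m+K_o)$ for some non-negative integers $m,n,o$.
   Context: $K_{m,n,o}$ is the complete tripartite graph with parts of sizes $m,n,o$; $T_n$ is the edgeless graph on $n$ vertices; $K_m$ the complete graph on $m$ vertices; $G+H$ is the disjoint union and $G\vee H$ the join (disjoint union plus all edges between $G$ and $H$). *)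

theory Defs
  imports Main
begin

type_synonym 'a graph = "'a set \<times> ('a \<Rightarrow> 'a \<Rightarrow> bool)"

definition verts :: "'a graph \<Rightarrow> 'a set" where "verts G = fst G"
definition adj :: "'a graph \<Rightarrow> 'a \<Rightarrow> 'a \<Rightarrow> bool" where "adj G = snd G"

definition sgraph :: "'a graph \<Rightarrow> bool" where
  "sgraph G \<longleftrightarrow> finite (verts G)
     \<and> (\<forall>x y. adj G x y \<longrightarrow> x \<in> verts G \<and> y \<in> verts G)
     \<and> (\<forall>x y. adj G x y \<longrightarrow> adj G y x)
     \<and> (\<forall>x. \<not> adj G x x)"

definition connected_graph :: "'a graph \<Rightarrow> bool" where
  "connected_graph G \<longleftrightarrow> (\<forall>x\<in>verts G. \<forall>y\<in>verts G. (adj G)\<^sup>*\<^sup>* x y)"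

definition induced_sub :: "'b graph \<Rightarrow> 'a graph \<Rightarrow> bool" where
  "induced_sub H G \<longleftrightarrow> (\<exists>f. inj_on f (verts H) \<and> f ` verts H \<subseteq> verts G
      \<and> (\<forall>x\<in>verts H. \<forall>y\<in>verts H. adj G (f x) (f y) \<longleftrightarrow> adj H x y))"

definition edge_graph :: "nat set \<Rightarrow> (nat \<times> nat) list \<Rightarrow> nat graph" where
  "edge_graph V es = (V, \<lambda>x y. (x, y) \<in> set es \<or> (y, x) \<in> set es)"

definition P4 :: "nat graph" where
  "P4 = edge_graph {1..4} [(1,2),(2,3),(3,4)]"

text \<open>K5 minus the two edges 12, 23 of a path 1-2-3.\<close>
definition K5_minus_S2 :: "nat graph" where
  "K5_minus_S2 = edge_graph {1..5} [(1,3),(1,4),(1,5),(2,4),(2,5),(3,4),(3,5),(4,5)]"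

text \<open>K6 minus the two disjoint edges 12, 34.\<close>
definition K6_minus_M2 :: "nat graph" where
  "K6_minus_M2 = edge_graph {1..6}
     [(1,3),(1,4),(1,5),(1,6),(2,3),(2,4),(2,5),(2,6),(3,5),(3,6),(4,5),(4,6),(5,6)]"

definition F2_4 :: "nat graph" where
  "F2_4 = edge_graph {1..5} [(2,3),(2,4),(3,4),(1,4),(4,5)]"

definition F2_5 :: "nat graph" where
  "F2_5 = edge_graph {1..5} [(1,2),(1,4),(2,3),(2,4),(3,4),(4,5)]"

definition F2 :: "nat graph set" where
  "F2 = {P4, K5_minus_S2, K6_minus_M2, F2_4, F2_5}"

definition F2_free :: "'a graph \<Rightarrow> bool" where
  "F2_free G \<longleftrightarrow> (\<forall>H\<in>F2. \<not> induced_sub H G)"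

text \<open>Complete tripartite graph K_{m,n,p}: vertex (i,j) is the j-th vertex of part i.\<close>
definition K3part :: "nat \<Rightarrow> nat \<Rightarrow> nat \<Rightarrow> (nat \<times> nat) graph" where
  "K3part m n p = ({0}\<times>{..<m} \<union> {1}\<times>{..<n} \<union> {2}\<times>{..<p}, \<lambda>x y. fst x \<noteq> fst y)"

text \<open>T_n join (K_m + K_p): part 0 is the edgeless T_n, parts 1 and 2 the cliques.\<close>
definition TKK :: "nat \<Rightarrow> nat \<Rightarrow> nat \<Rightarrow> (nat \<times> nat) graph" where
  "TKK n m p = ({0}\<times>{..<n} \<union> {1}\<times>{..<m} \<union> {2}\<times>{..<p},
     \<lambda>x y. x \<noteq> y \<and> ((fst x = 0 \<longleftrightarrow> fst y \<noteq> 0) \<or> (fst x \<noteq> 0 \<and> fst x = fst y)))"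

end

theory Submission
  imports Defs
begin

text \<open>Both families of host graphs are blow-ups of a pattern on three labels: G is an induced
subgraph of some K_{m,n,o} (resp. T_n \<or> (K_m + K_o)) iff its vertices can be labelled by 0, 1, 2
so that two distinct vertices are adjacent exactly when their labels are different (resp. related
by the pattern of T_n \<or> (K_m + K_o)). Such labellings pull back along induced embeddings, and an
exhaustive search shows that no member of F2 has one; this gives sufficiency.

For necessity, let G be connected and F2-free. If non-adjacency is transitive, G is complete
multipartite: without K4 it has at most three parts, and with K4 the absence of K6 minus M2
leaves at most one part with more than one vertex, so G = T_n \<or> K_m. Otherwise there are an
edge xz and a vertex y adjacent to neither. P4-freeness and connectivity give x and y a common
neighbour and make {x, y} dominating; the forbidden graphs then force the non-neighbours of y and
those of x to be two cliques with no edges between them, and the common neighbours of x and y to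
be an independent set joined to both, which is T_n \<or> (K_m + K_o).\<close>

lemma edge_graph_simps [simp]:
  "verts (edge_graph V es) = V"
  "adj (edge_graph V es) x y \<longleftrightarrow> (x, y) \<in> set es \<or> (y, x) \<in> set es"
  by (auto simp: verts_def adj_def edge_graph_def)

definition TKK_rel :: "nat \<Rightarrow> nat \<Rightarrow> bool" where
  "TKK_rel i j \<longleftrightarrow> (i = 0 \<longleftrightarrow> j \<noteq> 0) \<or> (i \<noteq> 0 \<and> i = j)"

definition blowup :: "(nat \<Rightarrow> nat \<Rightarrow> bool) \<Rightarrow> nat \<Rightarrow> nat \<Rightarrow> nat \<Rightarrow> (nat \<times> nat) graph" where
  "blowup R k0 k1 k2 = ({0} \<times> {..<k0} \<union> {1} \<times> {..<k1} \<union> {2} \<times> {..<k2},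
     \<lambda>x y. x \<noteq> y \<and> R (fst x) (fst y))"

lemma K3part_eq_blowup: "K3part m n p = blowup (\<noteq>) m n p"
  unfolding K3part_def blowup_def by (auto intro!: ext)

lemma TKK_eq_blowup: "TKK n m p = blowup TKK_rel n m p"
  unfolding TKK_def blowup_def TKK_rel_def by (auto intro!: ext)

definition blowup_labelling :: "(nat \<Rightarrow> nat \<Rightarrow> bool) \<Rightarrow> 'a graph \<Rightarrow> ('a \<Rightarrow> nat) \<Rightarrow> bool" where
  "blowup_labelling R G c \<longleftrightarrow> (\<forall>v\<in>verts G. c v < 3) \<and>
     (\<forall>u\<in>verts G. \<forall>v\<in>verts G. adj G u v \<longleftrightarrow> u \<noteq> v \<and> R (c u) (c v))"

lemma blowup_labelling_fst: "blowup_labelling R (blowup R k0 k1 k2) fst"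
  unfolding blowup_labelling_def blowup_def verts_def adj_def by auto

lemma blowup_labelling_induced_sub:
  assumes "induced_sub H G" and "blowup_labelling R G c"
  shows "\<exists>d. blowup_labelling R H d"
proof -
  obtain f where f: "inj_on f (verts H)" "f ` verts H \<subseteq> verts G"
    "\<forall>u\<in>verts H. \<forall>v\<in>verts H. adj G (f u) (f v) \<longleftrightarrow> adj H u v"
    using assms(1) unfolding induced_sub_def by blast
  have "f u = f v \<longleftrightarrow> u = v" if "u \<in> verts H" "v \<in> verts H" for u v
    using f(1) that by (auto dest: inj_onD)
  then have "blowup_labelling R H (c \<circ> f)"
    using assms(2) f(2,3) unfolding blowup_labelling_def by (auto simp: subset_eq)
  then show ?thesis by blast
qed

lemma induced_sub_blowupI:
  assumes fin: "finite (verts G)" and c: "blowup_labelling R G c"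
  shows "induced_sub G (blowup R (card {v\<in>verts G. c v = 0}) (card {v\<in>verts G. c v = 1})
           (card {v\<in>verts G. c v = 2}))" (is "induced_sub G (blowup R (?k 0) (?k 1) (?k 2))")
proof -
  define part where "part i = {v\<in>verts G. c v = i}" for i
  have "\<exists>h. bij_betw h (part i) {0..<card (part i)}" for i
    by (rule ex_bij_betw_finite_nat) (use fin in \<open>simp add: part_def\<close>)
  then obtain h where h: "\<And>i. bij_betw (h i) (part i) {0..<card (part i)}" by metis
  define f where "f v = (c v, h (c v) v)" for v
  have "inj_on f (verts G)"
  proof (rule inj_onI)
    fix u v assume "u \<in> verts G" "v \<in> verts G" "f u = f v"
    then have "u \<in> part (c u)" "v \<in> part (c u)" "h (c u) u = h (c u) v"
      by (auto simp: f_def part_def)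
    then show "u = v" using h[of "c u"] by (auto simp: bij_betw_def dest: inj_onD)
  qed
  moreover have "f v \<in> verts (blowup R (?k 0) (?k 1) (?k 2))" if "v \<in> verts G" for v
  proof -
    have "h (c v) v < card (part (c v))"
      using h[of "c v"] that by (auto simp: bij_betw_def part_def)
    moreover have "c v < 3" using c that by (simp add: blowup_labelling_def)
    ultimately show ?thesis
      by (auto simp: f_def part_def blowup_def verts_def less_Suc_eq numeral_eq_Suc)
  qed
  moreover have "f u \<noteq> f v \<longleftrightarrow> u \<noteq> v" if "u \<in> verts G" "v \<in> verts G" for u v
    using \<open>inj_on f (verts G)\<close> that by (auto dest: inj_onD)
  ultimately show ?thesis
    using c unfolding induced_sub_def blowup_labelling_def
    by (intro exI[of _ f]) (auto simp: blowup_def adj_def f_def)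
qed

lemma ex_induced_sub_blowup_iff:
  assumes "finite (verts G)"
  shows "(\<exists>k0 k1 k2. induced_sub G (blowup R k0 k1 k2)) \<longleftrightarrow> (\<exists>c. blowup_labelling R G c)"
  using blowup_labelling_induced_sub[OF _ blowup_labelling_fst] induced_sub_blowupI[OF assms]
  by blast

text \<open>Backtracking search for the labellings of the vertices 1, ..., k that respect the
adjacency E: a partial labelling is extended only if the new vertex is consistent with all
earlier ones, which keeps the search small enough to be run by evaluation.\<close>

fun labellings :: "(nat \<Rightarrow> nat \<Rightarrow> bool) \<Rightarrow> (nat \<Rightarrow> nat \<Rightarrow> bool) \<Rightarrow> nat \<Rightarrow> nat list list" where
  "labellings R E 0 = [[]]"
| "labellings R E (Suc k) =
     [cs @ [l]. cs \<leftarrow> labellings R E k, l \<leftarrow> [0, 1, 2], \<not> E (Suc k) (Suc k) \<and>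
        (\<forall>i\<in>set [0..<k]. (E (Suc i) (Suc k) \<longleftrightarrow> R (cs ! i) l) \<and> (E (Suc k) (Suc i) \<longleftrightarrow> R l (cs ! i)))]"

lemma map_in_labellings:
  assumes "\<forall>i\<in>{1..k}. c i < 3" and "\<forall>i\<in>{1..k}. \<forall>j\<in>{1..k}. E i j \<longleftrightarrow> i \<noteq> j \<and> R (c i) (c j)"
  shows "map c [1..<Suc k] \<in> set (labellings R E k)"
  using assms
proof (induction k)
  case 0
  then show ?case by simp
next
  case (Suc k)
  define cs where "cs = map c [1..<Suc k]"
  have "cs \<in> set (labellings R E k)" using Suc by (simp add: cs_def)
  moreover have "map c [1..<Suc (Suc k)] = cs @ [c (Suc k)]" by (simp add: cs_def)
  moreover have "c (Suc k) < 3" using Suc.prems(1) by simp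
  then have "c (Suc k) \<in> set [0, 1, 2]" by auto
  moreover have "cs ! i = c (Suc i)" if "i < k" for i
    using that by (simp del: upt_Suc add: cs_def nth_map_upt)
  ultimately show ?case
    using Suc.prems(2) by (fastforce simp del: upt_Suc)
qed

lemma no_blowup_labelling:
  assumes "labellings R (adj (edge_graph {1..k} es)) k = []"
  shows "\<not> blowup_labelling R (edge_graph {1..k} es) c"
proof
  assume "blowup_labelling R (edge_graph {1..k} es) c"
  then have "map c [1..<Suc k] \<in> set (labellings R (adj (edge_graph {1..k} es)) k)"
    by (intro map_in_labellings) (auto simp: blowup_labelling_def)
  with assms show False by simp
qed

lemma F2_no_blowup_labelling:
  assumes "H \<in> F2" and "R = (\<noteq>) \<or> R = TKK_rel"
  shows "\<not> blowup_labelling R H c"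
proof -
  have "\<forall>H\<in>F2. \<not> blowup_labelling (\<noteq>) H c \<and> \<not> blowup_labelling TKK_rel H c"
    unfolding F2_def P4_def K5_minus_S2_def K6_minus_M2_def F2_4_def F2_5_def
    by (simp only: ball_simps simp_thms; intro conjI; rule no_blowup_labelling; code_simp)
  with assms show ?thesis by blast
qed

lemma F2_free_if_blowup_labelling:
  assumes "blowup_labelling R G c" and "R = (\<noteq>) \<or> R = TKK_rel"
  shows "F2_free G"
  using blowup_labelling_induced_sub[OF _ assms(1)] F2_no_blowup_labelling[OF _ assms(2)]
  unfolding F2_free_def by blast

lemma induced_sub_edge_graphI:
  assumes "length vs = k" and "distinct vs" and "set vs \<subseteq> verts G"
    and "\<forall>i\<in>{1..k}. \<forall>j\<in>{1..k}.
           adj G (vs ! (i - 1)) (vs ! (j - 1)) \<longleftrightarrow> (i, j) \<in> set es \<or> (j, i) \<in> set es"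
  shows "induced_sub (edge_graph {1..k} es) G"
  unfolding induced_sub_def
proof (intro exI[of _ "\<lambda>i. vs ! (i - 1)"] conjI)
  show "inj_on (\<lambda>i. vs ! (i - 1)) (verts (edge_graph {1..k} es))"
    using assms(1,2) by (auto simp: inj_on_def nth_eq_iff_index_eq)
  show "(\<lambda>i. vs ! (i - 1)) ` verts (edge_graph {1..k} es) \<subseteq> verts G"
    using assms(1,3) by (auto intro!: subsetD[OF assms(3)] nth_mem)
qed (use assms(4) in simp)

definition complete_multipartite :: "'a graph \<Rightarrow> bool" where
  "complete_multipartite G \<longleftrightarrow> (\<forall>a\<in>verts G. \<forall>b\<in>verts G. \<forall>c\<in>verts G.
     \<not> adj G a b \<longrightarrow> \<not> adj G b c \<longrightarrow> \<not> adj G a c)"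

locale simple_graph =
  fixes G :: "'a graph"
  assumes sgraph: "sgraph G"
begin

lemma adj_sym: "adj G x y \<longleftrightarrow> adj G y x"
  using sgraph unfolding sgraph_def by blast

lemma adj_irrefl [simp]: "\<not> adj G x x"
  using sgraph unfolding sgraph_def by blast

lemma adj_verts: "adj G x y \<Longrightarrow> x \<in> verts G \<and> y \<in> verts G"
  using sgraph unfolding sgraph_def by blast

lemma tripartite_labelling:
  assumes "complete_multipartite G"
    and no_K4: "\<not> (\<exists>a1\<in>verts G. \<exists>a2\<in>verts G. \<exists>a3\<in>verts G. \<exists>a4\<in>verts G.
      adj G a1 a2 \<and> adj G a1 a3 \<and> adj G a1 a4 \<and> adj G a2 a3 \<and> adj G a2 a4 \<and> adj G a3 a4)"
  shows "\<exists>c. blowup_labelling (\<noteq>) G c"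
proof (cases "verts G = {}")
  case True
  then show ?thesis by (auto simp: blowup_labelling_def)
next
  case False
  note tr = assms(1)[unfolded complete_multipartite_def, rule_format]
  obtain a0 where a0: "a0 \<in> verts G" using False by blast
  txt \<open>b0 is a neighbour of a0 and c0 a common neighbour of a0 and b0, whenever such vertices
    exist; the three labels are the parts of a0, b0 and c0.\<close>
  obtain b0 where b0: "b0 \<in> verts G" "(\<forall>v\<in>verts G. \<not> adj G v a0) \<or> adj G b0 a0"
    using a0 by blast
  obtain c0 where c0: "c0 \<in> verts G"
    "(\<forall>v\<in>verts G. \<not> (adj G v a0 \<and> adj G v b0)) \<or> (adj G c0 a0 \<and> adj G c0 b0)"
    using a0 by blast
  define c where "c v = (if \<not> adj G v a0 then 0 else if \<not> adj G v b0 then 1 else 2 :: nat)" for v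
  have "c a = c b \<longleftrightarrow> \<not> adj G a b" if ab: "a \<in> verts G" "b \<in> verts G" for a b
  proof (cases "adj G a a0 \<and> adj G a b0 \<and> adj G b a0 \<and> adj G b b0")
    case True
    then have "adj G c0 a0" "adj G c0 b0" "adj G b0 a0" using c0 b0 ab by auto
    then have "\<not> adj G a c0" "\<not> adj G b c0"
      using no_K4 True a0 b0 c0 ab by (metis adj_sym)+
    then have "\<not> adj G a b" using tr[of a c0 b] ab c0 by (auto simp: adj_sym)
    then show ?thesis using True by (simp add: c_def)
  next
    case False
    have "\<not> adj G a b" if "\<not> adj G a w" "\<not> adj G b w" "w \<in> verts G" for w
      using tr[of a w b] that ab by (auto simp: adj_sym)
    moreover have "adj G a b" if "adj G a w \<noteq> adj G b w" "w \<in> verts G" for w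
      using tr[of b a w] tr[of a b w] that ab by (auto simp: adj_sym)
    ultimately show ?thesis using False a0 b0 by (auto simp: c_def)
  qed
  then have "blowup_labelling (\<noteq>) G c"
    unfolding blowup_labelling_def by (auto simp: c_def)
  then show ?thesis by blast
qed

lemma K4_common_neighbours:
  assumes "complete_multipartite G"
    and "a1 \<in> verts G" "a2 \<in> verts G" "a3 \<in> verts G" "a4 \<in> verts G"
    and "adj G a1 a2" "adj G a1 a3" "adj G a1 a4" "adj G a2 a3" "adj G a2 a4" "adj G a3 a4"
    and "u \<in> verts G" "a \<in> verts G"
  shows "\<exists>s t. s \<in> verts G \<and> t \<in> verts G \<and> s \<noteq> t \<and> adj G s t
    \<and> adj G s u \<and> adj G t u \<and> adj G s a \<and> adj G t a"
proof -
  note tr = assms(1)[unfolded complete_multipartite_def, rule_format]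
  have edge_dominates: "adj G p v \<or> adj G q v" if "p \<in> verts G" "q \<in> verts G" "v \<in> verts G" "adj G p q"
    for p q v
    using tr[of p v q] that by (auto simp: adj_sym)
  have "adj G a1 u \<or> adj G a2 u" "adj G a1 u \<or> adj G a3 u" "adj G a1 u \<or> adj G a4 u"
    "adj G a2 u \<or> adj G a3 u" "adj G a2 u \<or> adj G a4 u" "adj G a3 u \<or> adj G a4 u"
    "adj G a1 a \<or> adj G a2 a" "adj G a1 a \<or> adj G a3 a" "adj G a1 a \<or> adj G a4 a"
    "adj G a2 a \<or> adj G a3 a" "adj G a2 a \<or> adj G a4 a" "adj G a3 a \<or> adj G a4 a"
    using edge_dominates assms by blast+
  txt \<open>Each of u and a misses at most one vertex of the clique, so two of its vertices remain.\<close>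
  then show ?thesis using assms adj_irrefl by (smt (verit))
qed

end

locale F2_free_graph = simple_graph +
  assumes F2_free: "F2_free G"
begin

lemma F2_not_induced: "H \<in> F2 \<Longrightarrow> \<not> induced_sub H G"
  using F2_free unfolding F2_free_def by blast

lemma no_induced_P4:
  assumes "v1 \<in> verts G" "v2 \<in> verts G" "v3 \<in> verts G" "v4 \<in> verts G" "distinct [v1, v2, v3, v4]"
    "adj G v1 v2" "\<not> adj G v1 v3" "\<not> adj G v1 v4" "adj G v2 v3" "\<not> adj G v2 v4" "adj G v3 v4"
  shows False
proof -
  have "induced_sub P4 G"
    unfolding P4_def
    by (rule induced_sub_edge_graphI[of "[v1, v2, v3, v4]"])
      (use assms in \<open>auto simp: adj_sym eval_nat_numeral atLeastAtMostSuc_conv\<close>)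
  then show False using F2_not_induced by (simp add: F2_def)
qed

lemma no_induced_K5_minus_S2:
  assumes "v1 \<in> verts G" "v2 \<in> verts G" "v3 \<in> verts G" "v4 \<in> verts G" "v5 \<in> verts G"
    "distinct [v1, v2, v3, v4, v5]" "\<not> adj G v1 v2" "adj G v1 v3" "adj G v1 v4" "adj G v1 v5"
    "\<not> adj G v2 v3" "adj G v2 v4" "adj G v2 v5" "adj G v3 v4" "adj G v3 v5" "adj G v4 v5"
  shows False
proof -
  have "induced_sub K5_minus_S2 G"
    unfolding K5_minus_S2_def
    by (rule induced_sub_edge_graphI[of "[v1, v2, v3, v4, v5]"])
      (use assms in \<open>auto simp: adj_sym eval_nat_numeral atLeastAtMostSuc_conv\<close>)
  then show False using F2_not_induced by (simp add: F2_def)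
qed

lemma no_induced_K6_minus_M2:
  assumes "v1 \<in> verts G" "v2 \<in> verts G" "v3 \<in> verts G" "v4 \<in> verts G" "v5 \<in> verts G"
    "v6 \<in> verts G" "distinct [v1, v2, v3, v4, v5, v6]" "\<not> adj G v1 v2" "adj G v1 v3" "adj G v1 v4"
    "adj G v1 v5" "adj G v1 v6" "adj G v2 v3" "adj G v2 v4" "adj G v2 v5" "adj G v2 v6"
    "\<not> adj G v3 v4" "adj G v3 v5" "adj G v3 v6" "adj G v4 v5" "adj G v4 v6" "adj G v5 v6"
  shows False
proof -
  have "induced_sub K6_minus_M2 G"
    unfolding K6_minus_M2_def
    by (rule induced_sub_edge_graphI[of "[v1, v2, v3, v4, v5, v6]"])
      (use assms in \<open>auto simp: adj_sym eval_nat_numeral atLeastAtMostSuc_conv\<close>)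
  then show False using F2_not_induced by (simp add: F2_def)
qed

lemma no_induced_F2_4:
  assumes "v1 \<in> verts G" "v2 \<in> verts G" "v3 \<in> verts G" "v4 \<in> verts G" "v5 \<in> verts G"
    "distinct [v1, v2, v3, v4, v5]" "\<not> adj G v1 v2" "\<not> adj G v1 v3" "adj G v1 v4" "\<not> adj G v1 v5"
    "adj G v2 v3" "adj G v2 v4" "\<not> adj G v2 v5" "adj G v3 v4" "\<not> adj G v3 v5" "adj G v4 v5"
  shows False
proof -
  have "induced_sub F2_4 G"
    unfolding F2_4_def
    by (rule induced_sub_edge_graphI[of "[v1, v2, v3, v4, v5]"])
      (use assms in \<open>auto simp: adj_sym eval_nat_numeral atLeastAtMostSuc_conv\<close>)
  then show False using F2_not_induced by (simp add: F2_def)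
qed

lemma no_induced_F2_5:
  assumes "v1 \<in> verts G" "v2 \<in> verts G" "v3 \<in> verts G" "v4 \<in> verts G" "v5 \<in> verts G"
    "distinct [v1, v2, v3, v4, v5]" "adj G v1 v2" "\<not> adj G v1 v3" "adj G v1 v4" "\<not> adj G v1 v5"
    "adj G v2 v3" "adj G v2 v4" "\<not> adj G v2 v5" "adj G v3 v4" "\<not> adj G v3 v5" "adj G v4 v5"
  shows False
proof -
  have "induced_sub F2_5 G"
    unfolding F2_5_def
    by (rule induced_sub_edge_graphI[of "[v1, v2, v3, v4, v5]"])
      (use assms in \<open>auto simp: adj_sym eval_nat_numeral atLeastAtMostSuc_conv\<close>)
  then show False using F2_not_induced by (simp add: F2_def)
qed

lemma reachable_within_two:
  assumes "(adj G)\<^sup>*\<^sup>* x y"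
  shows "x = y \<or> adj G x y \<or> (\<exists>w. adj G x w \<and> adj G w y)"
  using assms
proof (induction rule: rtranclp_induct)
  case base
  then show ?case by simp
next
  case (step v v')
  from step.IH show ?case
  proof (elim disjE exE conjE)
    fix w assume xw: "adj G x w" and wv: "adj G w v"
    show ?case
    proof (rule ccontr)
      assume "\<not> ?case"
      then have "x \<noteq> v'" "\<not> adj G x v'" "\<not> adj G w v'" "\<not> adj G x v"
        using xw step.hyps(2) by auto
      then show False
        by (intro no_induced_P4[of x w v v'])
          (use xw wv step.hyps(2) adj_verts in \<open>auto simp: adj_sym\<close>)
    qed
  qed (use step.hyps in auto)
qed

lemma non_neighbours_clique:
  assumes "x \<in> verts G" "y \<in> verts G" "w \<in> verts G" "x \<noteq> y" "\<not> adj G x y"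
    and "adj G w x" "adj G w y"
    and cover: "\<And>v. v \<in> verts G \<Longrightarrow> v \<noteq> y \<Longrightarrow> \<not> adj G v y \<Longrightarrow> v = x \<or> adj G v x"
    and "a \<in> verts G" "b \<in> verts G" "a \<noteq> b" "a \<noteq> y" "\<not> adj G a y" "b \<noteq> y" "\<not> adj G b y"
  shows "adj G a b"
proof (rule ccontr)
  assume ab: "\<not> adj G a b"
  have "a = x \<or> adj G a x" "b = x \<or> adj G b x" using cover assms by simp_all
  then have ax: "adj G a x" and bx: "adj G b x" using \<open>a \<noteq> b\<close> ab adj_sym by metis+
  have wa: "adj G w a"
    by (rule ccontr, rule no_induced_P4[of a x w y]) (use assms ax in \<open>auto simp: adj_sym\<close>)
  have wb: "adj G w b"
    by (rule ccontr, rule no_induced_P4[of b x w y]) (use assms bx in \<open>auto simp: adj_sym\<close>)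
  show False
    by (rule no_induced_F2_5[of a x b w y]) (use assms ab ax bx wa wb in \<open>auto simp: adj_sym\<close>)
qed

lemma non_neighbourhoods_nonadjacent:
  assumes "x \<in> verts G" "y \<in> verts G" "x \<noteq> y" "\<not> adj G x y"
    and cover_x: "\<And>v. v \<in> verts G \<Longrightarrow> v \<noteq> y \<Longrightarrow> \<not> adj G v y \<Longrightarrow> v = x \<or> adj G v x"
    and cover_y: "\<And>v. v \<in> verts G \<Longrightarrow> v \<noteq> x \<Longrightarrow> \<not> adj G v x \<Longrightarrow> v = y \<or> adj G v y"
    and "a \<in> verts G" "b \<in> verts G" "a \<noteq> y" "\<not> adj G a y" "b \<noteq> x" "\<not> adj G b x"
  shows "\<not> adj G a b"
proof
  assume ab: "adj G a b"
  then have "a \<noteq> x" "b \<noteq> y" using assms by (auto simp: adj_sym)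
  then have "adj G a x" "adj G b y" using cover_x[of a] cover_y[of b] assms by auto
  then show False
    by (intro no_induced_P4[of x a b y]) (use assms ab \<open>a \<noteq> x\<close> in \<open>auto simp: adj_sym\<close>)
qed

lemma common_neighbour_adj_non_neighbour:
  assumes "x \<in> verts G" "y \<in> verts G" "x \<noteq> y" "\<not> adj G x y"
    and cover: "\<And>v. v \<in> verts G \<Longrightarrow> v \<noteq> y \<Longrightarrow> \<not> adj G v y \<Longrightarrow> v = x \<or> adj G v x"
    and "a \<in> verts G" "b \<in> verts G" "adj G a x" "adj G a y" "b \<noteq> y" "\<not> adj G b y"
  shows "adj G a b"
proof (rule ccontr)
  assume ab: "\<not> adj G a b"
  then have "adj G b x" using cover[of b] assms by auto
  then show False
    by (intro no_induced_P4[of b x a y]) (use assms ab in \<open>auto simp: adj_sym\<close>)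
qed

lemma common_neighbours_independent:
  assumes "x \<in> verts G" "y \<in> verts G" "z \<in> verts G" "x \<noteq> y" "y \<noteq> z"
    and "\<not> adj G x y" "\<not> adj G y z" "adj G x z"
    and "a \<in> verts G" "b \<in> verts G" "adj G a x" "adj G a y" "adj G b x" "adj G b y"
  shows "\<not> adj G a b"
proof
  assume ab: "adj G a b"
  have az: "adj G a z"
    by (rule ccontr, rule no_induced_P4[of z x a y]) (use assms in \<open>auto simp: adj_sym\<close>)
  have bz: "adj G b z"
    by (rule ccontr, rule no_induced_P4[of z x b y]) (use assms in \<open>auto simp: adj_sym\<close>)
  show False
    by (rule no_induced_K5_minus_S2[of x y z a b]) (use assms ab az bz in \<open>auto simp: adj_sym\<close>)
qed

lemma TKK_labelling_of_K4:
  assumes "complete_multipartite G"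
    and "a1 \<in> verts G" "a2 \<in> verts G" "a3 \<in> verts G" "a4 \<in> verts G"
      "adj G a1 a2" "adj G a1 a3" "adj G a1 a4" "adj G a2 a3" "adj G a2 a4" "adj G a3 a4"
  shows "\<exists>c. blowup_labelling TKK_rel G c"
proof (cases "\<exists>u\<in>verts G. \<exists>u'\<in>verts G. u \<noteq> u' \<and> \<not> adj G u u'")
  case False
  then have "blowup_labelling TKK_rel G (\<lambda>_. 1)"
    by (auto simp: blowup_labelling_def TKK_rel_def)
  then show ?thesis by blast
next
  case True
  note tr = assms(1)[unfolded complete_multipartite_def, rule_format]
  obtain u u' where u: "u \<in> verts G" "u' \<in> verts G" "u \<noteq> u'" "\<not> adj G u u'"
    using True by blast
  have clique: "adj G a b"
    if ab: "a \<in> verts G" "b \<in> verts G" "a \<noteq> b" "adj G a u" "adj G b u" for a b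
  proof (rule ccontr)
    assume nab: "\<not> adj G a b"
    obtain s t where st: "s \<in> verts G" "t \<in> verts G" "s \<noteq> t" "adj G s t"
      "adj G s u" "adj G t u" "adj G s a" "adj G t a"
      using K4_common_neighbours[OF assms u(1) ab(1)] by blast
    have u': "adj G u' v" if "v \<in> verts G" "adj G v u" for v
      using tr[of u u' v] u that by (auto simp: adj_sym)
    have b: "adj G b v" if "v \<in> verts G" "adj G v a" for v
      using tr[of a b v] ab nab that by (auto simp: adj_sym)
    have adjs: "adj G u a" "adj G u b" "adj G u s" "adj G u t"
      "adj G u' a" "adj G u' b" "adj G u' s" "adj G u' t"
      "adj G a s" "adj G a t" "adj G b s" "adj G b t"
      using u ab st u'[OF ab(1,4)] u'[OF ab(2,5)] u'[OF st(1,5)] u'[OF st(2,6)]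
        b[OF st(1,7)] b[OF st(2,8)]
      by (simp_all add: adj_sym)
    have "distinct [u, u', a, b, s, t]" using u(3) ab(3) st(3) adjs by auto
    from no_induced_K6_minus_M2[OF u(1,2) ab(1,2) st(1,2) this u(4) adjs(1-8) nab adjs(9-12) st(4)]
    show False .
  qed
  define c where "c v = (if adj G v u then 1 else 0 :: nat)" for v
  have "adj G a b \<longleftrightarrow> a \<noteq> b \<and> TKK_rel (c a) (c b)" if ab: "a \<in> verts G" "b \<in> verts G" for a b
  proof (cases "a = b")
    case False
    consider "adj G a u" "adj G b u" | "adj G a u \<noteq> adj G b u" | "\<not> adj G a u" "\<not> adj G b u"
      by blast
    then show ?thesis
    proof cases
      case 1
      then show ?thesis using clique[OF ab False] False by (simp add: c_def TKK_rel_def)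
    next
      case 2
      then have "adj G a b" using tr[OF ab u(1)] tr[OF ab(2,1) u(1)] by (auto simp: adj_sym)
      then show ?thesis using 2 by (auto simp: c_def TKK_rel_def)
    next
      case 3
      then have "\<not> adj G a b" using tr[OF ab(1) u(1) ab(2)] by (simp add: adj_sym)
      then show ?thesis using 3 by (simp add: c_def TKK_rel_def)
    qed
  qed simp
  then have "blowup_labelling TKK_rel G c"
    unfolding blowup_labelling_def by (auto simp: c_def)
  then show ?thesis by blast
qed

end

locale connected_F2_free_graph = F2_free_graph +
  assumes connected: "connected_graph G"
begin

lemma common_neighbour:
  assumes "x \<in> verts G" "y \<in> verts G" "x \<noteq> y" "\<not> adj G x y"
  obtains w where "adj G x w" "adj G w y"
  using reachable_within_two[of x y] connected assms unfolding connected_graph_def by blast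

lemma dominating_pair:
  assumes "x \<in> verts G" "y \<in> verts G" "z \<in> verts G" "w \<in> verts G" "x \<noteq> y" "y \<noteq> z"
    and "adj G x z" "\<not> adj G x y" "\<not> adj G y z" "adj G w x" "adj G w y" "adj G w z"
    and "v \<in> verts G" "v \<noteq> x" "v \<noteq> y"
  shows "adj G v x \<or> adj G v y"
proof (rule ccontr)
  assume "\<not> ?thesis"
  then have "\<not> adj G v x" "\<not> adj G v y" by auto
  note base = this assms
  show False
  proof (cases "adj G v z")
    case vz: True
    have "adj G v w"
      by (rule ccontr, rule no_induced_P4[of y w z v]) (use vz base in \<open>auto simp: adj_sym\<close>)
    show False
      by (rule no_induced_F2_5[of x z v w y]) (use vz \<open>adj G v w\<close> base in \<open>auto simp: adj_sym\<close>)
  next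
    case vz: False
    show False
    proof (cases "adj G w v")
      case True
      show False
        by (rule no_induced_F2_4[of y x z w v]) (use vz True base in \<open>auto simp: adj_sym\<close>)
    next
      case wv: False
      obtain u where vu: "adj G v u" and ux: "adj G u x"
        using common_neighbour[of v x] base by blast
      have uz: "adj G u z"
        by (rule ccontr, rule no_induced_P4[of z x u v])
          (use vu ux vz wv base adj_verts in \<open>auto simp: adj_sym\<close>)
      consider "adj G u y" | "\<not> adj G u y" "adj G w u" | "\<not> adj G u y" "\<not> adj G w u" by blast
      then show False
      proof cases
        case 1
        show False by (rule no_induced_F2_4[of y x z u v])
            (use 1 uz vu ux vz wv base adj_verts in \<open>auto simp: adj_sym\<close>)
      next
        case 2
        show False by (rule no_induced_P4[of v u w y])
            (use 2 uz vu ux vz wv base adj_verts in \<open>auto simp: adj_sym\<close>)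
      next
        case 3
        show False by (rule no_induced_P4[of y w x u])
            (use 3 uz vu ux vz wv base adj_verts in \<open>auto simp: adj_sym\<close>)
      qed
    qed
  qed
qed

lemma TKK_labelling_of_co_P3:
  assumes "x \<in> verts G" "y \<in> verts G" "z \<in> verts G" "x \<noteq> y" "y \<noteq> z"
    and "adj G x z" "\<not> adj G x y" "\<not> adj G y z"
  shows "\<exists>c. blowup_labelling TKK_rel G c"
proof -
  obtain w where xw: "adj G x w" and wy: "adj G w y"
    using common_neighbour[of x y] assms by blast
  have wV: "w \<in> verts G" using adj_verts wy by blast
  have wz: "adj G w z"
    by (rule ccontr, rule no_induced_P4[of z x w y]) (use assms xw wy wV in \<open>auto simp: adj_sym\<close>)
  have cover_x: "v = x \<or> adj G v x" if "v \<in> verts G" "v \<noteq> y" "\<not> adj G v y" for v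
    using dominating_pair[of x y z w v] assms xw wy wV wz that by (auto simp: adj_sym)
  have cover_y: "v = y \<or> adj G v y" if "v \<in> verts G" "v \<noteq> x" "\<not> adj G v x" for v
    using dominating_pair[of x y z w v] assms xw wy wV wz that by (auto simp: adj_sym)
  define c where
    "c v = (if v \<noteq> y \<and> \<not> adj G v y then 1 else if v \<noteq> x \<and> \<not> adj G v x then 2 else 0 :: nat)"
    for v
  have c0: "adj G v x \<and> adj G v y" if "v \<in> verts G" "c v = 0" for v
    using that assms unfolding c_def by (auto simp: adj_sym split: if_splits)
  have c1: "v \<noteq> y \<and> \<not> adj G v y" if "c v = 1" for v
    using that unfolding c_def by (auto split: if_splits)
  have c2: "v \<noteq> x \<and> \<not> adj G v x" if "c v = 2" for v
    using that unfolding c_def by (auto split: if_splits)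
  have part0: "\<not> adj G a b" if "a \<in> verts G" "b \<in> verts G" "c a = 0" "c b = 0" for a b
    using common_neighbours_independent[of x y z a b] c0 assms that by blast
  have part1: "adj G a b" if "a \<in> verts G" "b \<in> verts G" "a \<noteq> b" "c a = 1" "c b = 1" for a b
    using non_neighbours_clique[of x y w a b] c1 cover_x assms xw wy wV that
    by (auto simp: adj_sym)
  have part2: "adj G a b" if "a \<in> verts G" "b \<in> verts G" "a \<noteq> b" "c a = 2" "c b = 2" for a b
    using non_neighbours_clique[of y x w a b] c2 cover_y assms xw wy wV that
    by (auto simp: adj_sym)
  have join1: "adj G a b" if "a \<in> verts G" "b \<in> verts G" "c a = 0" "c b = 1" for a b
    using common_neighbour_adj_non_neighbour[of x y a b] c0 c1 cover_x assms that by blast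
  have join2: "adj G a b" if "a \<in> verts G" "b \<in> verts G" "c a = 0" "c b = 2" for a b
    using common_neighbour_adj_non_neighbour[of y x a b] c0 c2 cover_y assms that
    by (auto simp: adj_sym)
  have across: "\<not> adj G a b" if "a \<in> verts G" "b \<in> verts G" "c a = 1" "c b = 2" for a b
    using non_neighbourhoods_nonadjacent[of x y a b] c1 c2 cover_x cover_y assms that by blast
  have "adj G a b \<longleftrightarrow> a \<noteq> b \<and> TKK_rel (c a) (c b)" if ab: "a \<in> verts G" "b \<in> verts G" for a b
  proof (cases "a = b")
    case False
    have "c a \<in> {0, 1, 2}" "c b \<in> {0, 1, 2}" unfolding c_def by auto
    then show ?thesis
      using False ab part0[of a b] part1[of a b] part2[of a b] join1[of a b] join1[of b a]
        join2[of a b] join2[of b a] across[of a b] across[of b a] adj_sym[of a b]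
      by (auto simp: TKK_rel_def)
  qed simp
  moreover have "c v < 3" for v unfolding c_def by simp
  ultimately show ?thesis unfolding blowup_labelling_def by blast
qed

lemma blowup_labelling_exists:
  "\<exists>c. blowup_labelling (\<noteq>) G c \<or> blowup_labelling TKK_rel G c"
proof (cases "complete_multipartite G")
  case True
  then show ?thesis
    using tripartite_labelling TKK_labelling_of_K4 by blast
next
  case False
  then obtain x y z where "x \<in> verts G" "y \<in> verts G" "z \<in> verts G"
    "\<not> adj G x y" "\<not> adj G y z" "adj G x z"
    unfolding complete_multipartite_def by blast
  moreover from this have "x \<noteq> y" "y \<noteq> z" by auto
  ultimately show ?thesis using TKK_labelling_of_co_P3 by blast
qed

end

theorem theorem4p3:
  fixes G :: "'a graph"
  assumes "sgraph G" and "connected_graph G"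
  shows "F2_free G \<longleftrightarrow>
    (\<exists>m n p. induced_sub G (K3part m n p) \<or> induced_sub G (TKK n m p))"
proof -
  have "finite (verts G)" using assms(1) by (simp add: sgraph_def)
  then have "(\<exists>m n p. induced_sub G (K3part m n p) \<or> induced_sub G (TKK n m p)) \<longleftrightarrow>
      (\<exists>c. blowup_labelling (\<noteq>) G c \<or> blowup_labelling TKK_rel G c)"
    using ex_induced_sub_blowup_iff[of G "(\<noteq>)"] ex_induced_sub_blowup_iff[of G TKK_rel]
    by (auto simp: K3part_eq_blowup TKK_eq_blowup)
  moreover have "\<exists>c. blowup_labelling (\<noteq>) G c \<or> blowup_labelling TKK_rel G c"
    if "F2_free G"
  proof -
    interpret connected_F2_free_graph G
      using assms that by unfold_locales
    show ?thesis by (rule blowup_labelling_exists)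
  qed
  ultimately show ?thesis using F2_free_if_blowup_labelling by blast
qed

end
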